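(* For every integer $k\ge1$ there is a constant $C_k$ such that for $x\ge2$ \[ \sum_{n\le x}\frac{n^{k-1}}{\varphi(n)^k}=\mathfrak{S}_{(-k)}\log x+C_k+O_k\!\left(\frac{(\log x)^k}{x}\right), \] where $\mathfrak{S}_{(-k)}=\prod_p\left(1+\frac{(1-1/p)^{-k}-1}{p}\right)$.
   Context: $p$ denotes a prime and $\varphi$ is Euler's totient function. *)

theory Defs
  imports "HOL-Analysis.Analysis" "HOL-Number_Theory.Number_Theory"
begin

definition singular_series_neg :: "nat \<Rightarrow> real" where
  "singular_series_neg k =
     (\<Prod>n. if prime n then 1 + ((1 - 1 / real n) powi (- int k) - 1) / real n else 1)"

end

theory Submission
  imports Defs "HOL-Computational_Algebra.Squarefree"
begin

text \<open>Let g = phi_weight k: it is multiplicative, supported on squarefree numbers, and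
  g(p) = (p/(p-1))^k - 1, roughly k/p. Then n^(k-1)/phi(n)^k = (1/n) sum_{d|n} g(d), and swapping the
  sums turns the left-hand side into sum_{d<=x} g(d)/d H(floor(x/d)). Since H(floor y) = ln y + gamma
  + O(1/y), this is (sum_d g(d)/d) ln x + C plus an error which Rankin's trick bounds by
  x^(sigma-1) sum_d g(d) d^(-sigma). Comparing Euler factors, sum_d g(d) d^(-sigma) is at most a
  constant times zeta(1+sigma)^k, i.e. O(sigma^(-k)), and sigma = 1/(4 ln x) yields the error
  O((log x)^k/x). Finally sum_d g(d)/d is the Euler product S_(-k).\<close>

lemma prime_factorization_prod_primes:
  assumes "finite S" "\<And>p. p \<in> S \<Longrightarrow> prime (p::nat)"
  shows "prime_factorization (\<Prod>S) = mset_set S"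
proof -
  have "prime_factorization (\<Prod>S) = (\<Sum>p\<in>S. prime_factorization (id p))"
    using assms by (subst prime_factorization_prod[symmetric]) (auto dest: prime_gt_0_nat)
  also have "\<dots> = (\<Sum>p\<in>S. {#p#})"
    using assms by (intro sum.cong) (auto simp: prime_factorization_prime)
  also have "\<dots> = mset_set S" using assms(1) by (induction S rule: finite_induct) auto
  finally show ?thesis .
qed

lemma prime_factors_prod_primes:
  assumes "finite S" "\<And>p. p \<in> S \<Longrightarrow> prime (p::nat)"
  shows "prime_factors (\<Prod>S) = S"
  using prime_factorization_prod_primes[OF assms] assms(1) by simp

lemma squarefree_prod_primes:
  assumes "finite S" "\<And>p. p \<in> S \<Longrightarrow> prime (p::nat)"
  shows "squarefree (\<Prod>S)"
proof -
  have nz: "\<Prod>S \<noteq> 0" using assms by (auto dest: prime_gt_0_nat)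
  show ?thesis
  proof (subst squarefree_factorial_semiring''[OF nz], intro allI impI)
    fix p :: nat assume "prime p"
    then have "multiplicity p (\<Prod>S) = count (prime_factorization (\<Prod>S)) p"
      by (simp add: count_prime_factorization_prime)
    also have "\<dots> \<le> 1"
      using prime_factorization_prod_primes[OF assms] assms(1) by (simp add: count_mset_set')
    finally show "multiplicity p (\<Prod>S) \<le> 1" .
  qed
qed

lemma squarefree_imp_pos: "squarefree (d::nat) \<Longrightarrow> d > 0"
  by (cases d) auto

lemma prod_prime_factors_squarefree:
  assumes "squarefree (d::nat)"
  shows "\<Prod>(prime_factors d) = d"
proof -
  have nz: "d \<noteq> 0" using squarefree_imp_pos[OF assms] by simp
  have "d = (\<Prod>p \<in> prime_factors d. p ^ multiplicity p d)"
    using prod_prime_factors[OF nz] by simp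
  also have "\<dots> = \<Prod>(prime_factors d)"
    using assms nz by (intro prod.cong) (auto simp: squarefree_factorial_semiring')
  finally show ?thesis by simp
qed

lemma prod_prime_factors_powr_squarefree:
  assumes "squarefree d"
  shows "(\<Prod>p\<in>prime_factors d. real p powr r) = real d powr r"
proof -
  have "(\<Prod>p\<in>prime_factors d. real p powr r) = real (\<Prod>(prime_factors d)) powr r"
    by (simp add: prod_powr_distrib)
  then show ?thesis by (simp add: prod_prime_factors_squarefree[OF assms])
qed

lemma squarefree_dvd_iff_prime_factors_subset:
  assumes "squarefree (d::nat)" "n > 0"
  shows "d dvd n \<longleftrightarrow> prime_factors d \<subseteq> prime_factors n"
proof
  assume "d dvd n" then show "prime_factors d \<subseteq> prime_factors n"
    using assms by (intro dvd_prime_factors) auto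
next
  assume sub: "prime_factors d \<subseteq> prime_factors n"
  have "prime_factorization d = mset_set (prime_factors d)"
    using prime_factorization_prod_primes[of "prime_factors d"]
      prod_prime_factors_squarefree[OF assms(1)] by auto
  also have "\<dots> \<subseteq># mset_set (prime_factors n)"
    using sub by (simp add: subset_imp_msubset_mset_set)
  also have "\<dots> \<subseteq># prime_factorization n" by (rule mset_set_set_mset_msubset)
  finally show "d dvd n"
    using assms squarefree_imp_pos[OF assms(1)] by (intro prime_factorization_subset_imp_dvd) auto
qed

lemma finite_squarefree_prime_factors_subset:
  assumes "finite P"
  shows "finite {d::nat. squarefree d \<and> prime_factors d \<subseteq> P}"
proof (rule finite_subset)
  show "{d::nat. squarefree d \<and> prime_factors d \<subseteq> P} \<subseteq> Prod ` Pow P"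
  proof
    fix d :: nat assume "d \<in> {d. squarefree d \<and> prime_factors d \<subseteq> P}"
    then have "d = \<Prod>(prime_factors d)" "prime_factors d \<in> Pow P"
      using prod_prime_factors_squarefree by auto
    then show "d \<in> Prod ` Pow P" by blast
  qed
  show "finite (Prod ` Pow P)" using assms by simp
qed

lemma squarefree_less_prime_factors_subset:
  assumes "squarefree (d::nat)" "d < n"
  shows "prime_factors d \<subseteq> {p. prime p \<and> p < n}"
proof
  fix p assume p: "p \<in> prime_factors d"
  then have "p \<le> d" using squarefree_imp_pos[OF assms(1)] by (auto intro: dvd_imp_le)
  with p assms(2) show "p \<in> {p. prime p \<and> p < n}" by auto
qed

lemma prod_one_plus_eq_sum_squarefree:
  fixes a :: "nat \<Rightarrow> 'a :: comm_semiring_1"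
  assumes "finite P" "\<And>p. p \<in> P \<Longrightarrow> prime p"
  shows "(\<Prod>p\<in>P. 1 + a p) =
    (\<Sum>d\<in>{d. squarefree d \<and> prime_factors d \<subseteq> P}. \<Prod>p\<in>prime_factors d. a p)"
proof -
  have "(\<Prod>p\<in>P. 1 + a p) = (\<Sum>X\<in>Pow P. (\<Prod>p\<in>X. a p) * (\<Prod>p\<in>P-X. 1))"
    by (subst prod_add[OF assms(1), symmetric]) (simp add: add.commute)
  also have "\<dots> = (\<Sum>X\<in>Pow P. \<Prod>p\<in>X. a p)" by simp
  also have "\<dots> = (\<Sum>d\<in>{d. squarefree d \<and> prime_factors d \<subseteq> P}. \<Prod>p\<in>prime_factors d. a p)"
  proof (rule sum.reindex_bij_witness[where i = prime_factors and j = Prod])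
    fix X assume X: "X \<in> Pow P"
    then have fX: "finite X" and pX: "\<And>p. p \<in> X \<Longrightarrow> prime p"
      using assms finite_subset by auto
    show "prime_factors (\<Prod>X) = X" by (rule prime_factors_prod_primes[OF fX pX])
    then show "\<Prod>X \<in> {d. squarefree d \<and> prime_factors d \<subseteq> P}"
      using squarefree_prod_primes[OF fX pX] X by auto
    show "(\<Prod>p\<in>prime_factors (\<Prod>X). a p) = (\<Prod>p\<in>X. a p)"
      by (simp add: prime_factors_prod_primes[OF fX pX])
  qed (auto simp: prod_prime_factors_squarefree)
  finally show ?thesis .
qed

definition phi_weight_prime :: "nat \<Rightarrow> nat \<Rightarrow> real" where
  "phi_weight_prime k p = (real p / (real p - 1)) ^ k - 1"

definition phi_weight :: "nat \<Rightarrow> nat \<Rightarrow> real" where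
  "phi_weight k d = (if squarefree d then \<Prod>p\<in>prime_factors d. phi_weight_prime k p else 0)"

lemma phi_weight_prime_nonneg: "p \<ge> 2 \<Longrightarrow> phi_weight_prime k p \<ge> 0"
  unfolding phi_weight_prime_def by (simp add: one_le_power)

lemma phi_weight_nonneg: "phi_weight k d \<ge> 0"
  unfolding phi_weight_def
  by (auto intro!: prod_nonneg phi_weight_prime_nonneg prime_ge_2_nat
           dest: in_prime_factors_imp_prime)

lemma sum_phi_weight_dvd:
  assumes "n > 0"
  shows "(\<Sum>d | d dvd n. phi_weight k d) = (\<Prod>p\<in>prime_factors n. 1 + phi_weight_prime k p)"
proof -
  have "(\<Sum>d | d dvd n. phi_weight k d) = (\<Sum>d | d dvd n \<and> squarefree d. phi_weight k d)"
    using assms by (intro sum.mono_neutral_right) (auto simp: phi_weight_def)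
  also have "{d. d dvd n \<and> squarefree d} = {d. squarefree d \<and> prime_factors d \<subseteq> prime_factors n}"
    using squarefree_dvd_iff_prime_factors_subset[OF _ assms] by blast
  also have "(\<Sum>d\<in>\<dots>. phi_weight k d) = (\<Sum>d\<in>\<dots>. \<Prod>p\<in>prime_factors d. phi_weight_prime k p)"
    by (intro sum.cong) (auto simp: phi_weight_def)
  also have "\<dots> = (\<Prod>p\<in>prime_factors n. 1 + phi_weight_prime k p)"
    by (rule prod_one_plus_eq_sum_squarefree[symmetric]) auto
  finally show ?thesis .
qed

lemma totient_ratio_eq_sum_phi_weight:
  assumes "n > 0" "k \<ge> 1"
  shows "real n ^ (k - 1) / real (totient n) ^ k = (\<Sum>d | d dvd n. phi_weight k d) / real n"
proof -
  let ?P = "prime_factors n"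
  have factor: "(real p / (real p - 1)) ^ k = 1 / (1 - 1 / real p) ^ k" if "p \<in> ?P" for p
  proof -
    have "p \<ge> 2" using that by (auto intro: prime_ge_2_nat)
    then have "real p \<ge> 2" by simp
    then have "1 - 1 / real p = (real p - 1) / real p" by (simp add: field_simps)
    then show ?thesis by (simp add: power_divide)
  qed
  have nk: "real n ^ k = real n * real n ^ (k - 1)"
    using assms(2) by (simp add: power_eq_if)
  have "real n ^ (k - 1) / real (totient n) ^ k
        = real n ^ (k - 1) / (real n ^ k * (\<Prod>p\<in>?P. 1 - 1 / real p) ^ k)"
    by (simp add: totient_formula2 power_mult_distrib)
  also have "\<dots> = (\<Prod>p\<in>?P. 1 / (1 - 1 / real p) ^ k) / real n"
    using assms(1) by (simp add: nk prod_dividef prod_power_distrib)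
  also have "(\<Prod>p\<in>?P. 1 / (1 - 1 / real p) ^ k) = (\<Prod>p\<in>?P. 1 + phi_weight_prime k p)"
    by (intro prod.cong refl) (simp add: factor phi_weight_prime_def)
  finally show ?thesis by (simp add: sum_phi_weight_dvd[OF assms(1)])
qed

lemma sum_divisor_sum_div_eq_harm:
  fixes g :: "nat \<Rightarrow> real"
  shows "(\<Sum>n\<in>{1..N}. (\<Sum>d | d dvd n. g d) / real n) = (\<Sum>d\<in>{1..N}. g d / real d * harm (N div d))"
proof (induction N)
  case 0 then show ?case by simp
next
  case (Suc N)
  have divisors: "{d. d dvd Suc N} = insert (Suc N) {d\<in>{1..N}. d dvd Suc N}"
    by (auto dest: dvd_imp_le intro!: Nat.gr0I simp: le_Suc_eq)
  have step: "g d / real d * harm (Suc N div d)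
      = g d / real d * harm (N div d) + (if d dvd Suc N then g d / real (Suc N) else 0)"
    if d: "d \<in> {1..N}" for d
  proof (cases "d dvd Suc N")
    case True
    then obtain q where q: "Suc N = d * q" by auto
    have "Suc N div d = Suc (N div d)" using True by (simp add: div_Suc dvd_eq_mod_eq_0)
    moreover have "Suc N div d = q" using q d by simp
    ultimately have "harm (Suc N div d) = harm (N div d) + 1 / real q"
      by (simp add: harm_Suc divide_inverse)
    moreover have "g d / real d * (1 / real q) = g d / real (Suc N)"
      using q d by simp
    ultimately show ?thesis using True by (simp add: distrib_left)
  next
    case False then show ?thesis using d by (simp add: div_Suc dvd_eq_mod_eq_0)
  qed
  have "(\<Sum>d\<in>{1..Suc N}. g d / real d * harm (Suc N div d))
      = (\<Sum>d\<in>{1..N}. g d / real d * harm (Suc N div d)) + g (Suc N) / real (Suc N)"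
    by (simp add: sum.cl_ivl_Suc harm_Suc harm_expand(1))
  also have "(\<Sum>d\<in>{1..N}. g d / real d * harm (Suc N div d))
      = (\<Sum>d\<in>{1..N}. g d / real d * harm (N div d)
           + (if d dvd Suc N then g d / real (Suc N) else 0))"
    by (rule sum.cong[OF refl step])
  also have "\<dots> = (\<Sum>d\<in>{1..N}. g d / real d * harm (N div d))
        + (\<Sum>d\<in>{d\<in>{1..N}. d dvd Suc N}. g d) / real (Suc N)"
    by (simp add: sum.distrib sum.inter_filter[symmetric] sum_divide_distrib)
  finally show ?case
    using Suc by (simp add: divisors add_divide_distrib)
qed

lemma sum_totient_ratio_eq_sum_harm:
  assumes "k \<ge> 1"
  shows "(\<Sum>n\<in>{1..N}. real n ^ (k - 1) / real (totient n) ^ k)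
         = (\<Sum>d\<in>{1..N}. phi_weight k d / real d * harm (N div d))"
proof -
  have "(\<Sum>n\<in>{1..N}. real n ^ (k - 1) / real (totient n) ^ k)
        = (\<Sum>n\<in>{1..N}. (\<Sum>d | d dvd n. phi_weight k d) / real n)"
    using assms by (intro sum.cong refl totient_ratio_eq_sum_phi_weight) auto
  also have "\<dots> = (\<Sum>d\<in>{1..N}. phi_weight k d / real d * harm (N div d))"
    by (rule sum_divisor_sum_div_eq_harm)
  finally show ?thesis .
qed

lemma harm_minus_ln_Suc_mono:
  "m \<le> n \<Longrightarrow> harm m - ln (real m + 1) \<le> (harm n - ln (real n + 1) :: real)"
proof (induction n rule: dec_induct)
  case (step n)
  have "ln (real n + 1 + 1) - ln (real n + 1) < 1 / (real n + 1)"
    by (rule ln_diff_le_inverse) simp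
  then have "harm n - ln (real n + 1) \<le> harm (Suc n) - ln (real (Suc n) + 1)"
    by (simp add: harm_Suc field_simps)
  with step.IH show ?case by linarith
qed simp

lemma harm_minus_ln_bounds:
  assumes "n \<ge> 1"
  shows "0 \<le> harm n - ln (real n) - euler_mascheroni"
    and "harm n - ln (real n) - euler_mascheroni \<le> 1 / real n"
proof -
  have "euler_mascheroni \<le> harm n - ln (real n)"
    using euler_mascheroni_LIMSEQ
    by (rule LIMSEQ_le_const2)
       (use assms in \<open>auto intro!: exI[of _ n] euler_mascheroni_sequence_decreasing\<close>)
  then show "0 \<le> harm n - ln (real n) - euler_mascheroni" by simp
  have "harm n - ln (real n + 1) \<le> euler_mascheroni"
  proof (rule LIMSEQ_le_const[OF euler_mascheroni_LIMSEQ], intro exI[of _ n] allI impI)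
    fix m assume m: "m \<ge> n"
    then have "harm n - ln (real n + 1) \<le> harm m - ln (real m + 1)"
      by (rule harm_minus_ln_Suc_mono)
    also have "\<dots> \<le> harm m - ln (real m)" using m assms by simp
    finally show "harm n - ln (real n + 1) \<le> harm m - ln (real m)" .
  qed
  moreover have "ln (real n + 1) - ln (real n) < 1 / real n"
    by (rule ln_diff_le_inverse) (use assms in simp)
  ultimately show "harm n - ln (real n) - euler_mascheroni \<le> 1 / real n" by linarith
qed

lemma harm_floor_approx:
  fixes y :: real
  assumes "y \<ge> 1"
  shows "\<bar>harm (nat \<lfloor>y\<rfloor>) - ln y - euler_mascheroni\<bar> \<le> 2 / y"
proof -
  define n where "n = nat \<lfloor>y\<rfloor>"
  have n1: "n \<ge> 1" and ny: "real n \<le> y" "y < real n + 1"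
    using assms by (simp_all add: n_def le_nat_iff)
  have "ln y - ln (real n) \<le> ln (real n + 1) - ln (real n)" using ny n1 by simp
  also have "\<dots> < 1 / real n" by (rule ln_diff_le_inverse) (use n1 in simp)
  moreover have "0 \<le> ln y - ln (real n)" using ny n1 by simp
  ultimately have "\<bar>harm n - ln y - euler_mascheroni\<bar> \<le> 1 / real n"
    using harm_minus_ln_bounds[OF n1] by linarith
  also have "1 / real n \<le> 2 / y"
    using ny n1 by (simp add: field_simps)
  finally show ?thesis by (simp add: n_def)
qed

lemma powr_neg_le_pred_powr_neg:
  fixes u s :: real
  assumes u: "u \<ge> 2" and s: "s > 0"
  shows "s * u powr (- 1 - s) + u powr (- s) \<le> (u - 1) powr (- s)"
proof -
  have u0: "u > 0" "u - 1 > 0" using u by auto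
  have "ln ((u - 1) / u) \<le> (u - 1) / u - 1" using u0 by (intro ln_le_minus_one) simp
  also have "\<dots> = - 1 / u" using u0 by (simp add: field_simps)
  finally have "ln (u - 1) - ln u \<le> - 1 / u" using u0 by (simp add: ln_div)
  then have "s * (1 / u) \<le> s * (ln u - ln (u - 1))"
    using s by (intro mult_left_mono) auto
  then have "s / u \<le> s * ln u - s * ln (u - 1)" by (simp add: algebra_simps)
  then have "exp (s / u) \<le> exp (s * ln u - s * ln (u - 1))" by simp
  also have "\<dots> = u powr s / (u - 1) powr s" using u0 by (simp add: powr_def exp_diff)
  finally have "1 + s / u \<le> u powr s / (u - 1) powr s"
    using exp_ge_add_one_self[of "s / u"] by linarith
  then have "u powr (- s) * (1 + s / u) \<le> u powr (- s) * (u powr s / (u - 1) powr s)"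
    by (intro mult_left_mono) simp_all
  then show ?thesis
    using u0 by (simp add: powr_diff powr_minus field_simps)
qed

lemma sum_powr_neg_le:
  fixes s :: real
  assumes "s > 0"
  shows "(\<Sum>d\<in>{1..M}. real d powr (- 1 - s)) \<le> 1 + 1 / s"
proof -
  have partial: "(\<Sum>d\<in>{1..M}. real d powr (- 1 - s)) \<le> 1 + (1 - real M powr (- s)) / s"
    if "M \<ge> 1"
    using that
  proof (induction M rule: dec_induct)
    case (step M)
    have "real (Suc M) \<ge> 2" using step by simp
    from powr_neg_le_pred_powr_neg[OF this assms]
    have "real (Suc M) powr (- 1 - s) \<le> (real M powr (- s) - real (Suc M) powr (- s)) / s"
      using assms by (simp add: field_simps)
    then show ?case using step by (simp add: sum.cl_ivl_Suc field_simps diff_divide_distrib)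
  qed simp
  show ?thesis
  proof (cases "M \<ge> 1")
    case True
    have "(1 - real M powr (- s)) / s \<le> 1 / s" using assms by (simp add: divide_right_mono)
    with partial[OF True] show ?thesis by linarith
  qed (use assms in simp)
qed

lemma prod_primes_one_plus_powr_le:
  fixes s :: real
  assumes "finite P" "\<And>p. p \<in> P \<Longrightarrow> prime p" "s > 0"
  shows "(\<Prod>p\<in>P. 1 + real p powr (- 1 - s)) \<le> 1 + 1 / s"
proof -
  let ?D = "{d::nat. squarefree d \<and> prime_factors d \<subseteq> P}"
  have "(\<Prod>p\<in>P. 1 + real p powr (- 1 - s)) = (\<Sum>d\<in>?D. \<Prod>p\<in>prime_factors d. real p powr (- 1 - s))"
    by (rule prod_one_plus_eq_sum_squarefree[OF assms(1,2)])
  also have "\<dots> = (\<Sum>d\<in>?D. real d powr (- 1 - s))"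
    by (intro sum.cong refl prod_prime_factors_powr_squarefree) auto
  also have "\<dots> \<le> (\<Sum>d\<in>{1..\<Prod>P}. real d powr (- 1 - s))"
  proof (rule sum_mono2)
    show "?D \<subseteq> {1..\<Prod>P}"
    proof
      fix d assume d: "d \<in> ?D"
      have "\<Prod>P > 0" using assms(1,2) by (auto intro!: prod_pos prime_gt_0_nat)
      have "d = \<Prod>(prime_factors d)" using d prod_prime_factors_squarefree by auto
      also have "\<dots> dvd \<Prod>P" using d assms(1) by (intro prod_dvd_prod_subset) auto
      finally have "d \<le> \<Prod>P" using \<open>\<Prod>P > 0\<close> by (intro dvd_imp_le) auto
      moreover have "d \<ge> 1" using d squarefree_imp_pos[of d] by simp
      ultimately show "d \<in> {1..\<Prod>P}" by simp
    qed
  qed auto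
  also have "\<dots> \<le> 1 + 1 / s" by (rule sum_powr_neg_le[OF assms(3)])
  finally show ?thesis .
qed

lemma one_plus_power_le_quadratic:
  fixes w :: real
  assumes "0 \<le> w" "w \<le> 1"
  shows "(1 + w) ^ k \<le> 1 + real k * w + 3 ^ k * w^2"
proof (induction k)
  case (Suc k)
  have w3: "w^3 \<le> w^2" using assms by (simp add: power_decreasing)
  have "k < 3 ^ k" by (induction k) auto
  then have "real k \<le> 3 ^ k" by (metis less_imp_le of_nat_less_iff of_nat_numeral of_nat_power)
  then have k3: "real k * w^2 \<le> 3 ^ k * w^2" by (simp add: mult_right_mono)
  have "(1 + w) ^ Suc k \<le> (1 + w) * (1 + real k * w + 3 ^ k * w^2)"
    using Suc assms by (simp add: mult_left_mono)
  also have "\<dots> = 1 + real (Suc k) * w + (real k + 3 ^ k) * w^2 + 3 ^ k * w^3"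
    by (simp add: algebra_simps power2_eq_square power3_eq_cube)
  also have "\<dots> \<le> 1 + real (Suc k) * w + 3 ^ Suc k * w^2"
  proof -
    have "3 ^ k * w^3 \<le> 3 ^ k * w^2" using w3 by (intro mult_left_mono) auto
    moreover have "(real k + 3 ^ k) * w^2 = real k * w^2 + 3 ^ k * w^2" by (simp add: algebra_simps)
    moreover have "(3::real) ^ Suc k * w^2 = 3 * (3 ^ k * w^2)" by simp
    ultimately show ?thesis using k3 by linarith
  qed
  finally show ?case .
qed simp

lemma one_plus_linear_quadratic_le:
  fixes y t :: real
  assumes "0 \<le> y" "0 \<le> t" "t \<le> 1"
  shows "1 + t * (y + 2 * y^2) \<le> (1 + t * y) * (1 + y^2) ^ 2"
proof -
  have "(1 + t * y) * (1 + 2 * y^2) = 1 + t * (y + 2 * y^2) + (2 * y^2 * (1 - t) + 2 * t * y^3)"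
    by (simp add: algebra_simps power2_eq_square power3_eq_cube)
  moreover have "0 \<le> 2 * y^2 * (1 - t) + 2 * t * y^3" using assms by simp
  ultimately have "1 + t * (y + 2 * y^2) \<le> (1 + t * y) * (1 + 2 * y^2)" by linarith
  also have "\<dots> \<le> (1 + t * y) * (1 + y^2) ^ 2"
    using assms by (intro mult_left_mono) (auto simp: power2_eq_square algebra_simps)
  finally show ?thesis .
qed

text \<open>With y = 1/p and t = p^(-sigma) this bounds the Euler factor of sum_d g(d) d^(-sigma)
  by that of zeta(1+sigma)^k zeta(2)^(2k + 4*3^k).\<close>

lemma euler_factor_le:
  fixes y t :: real
  assumes y: "0 < y" "y \<le> 1/2" and t: "0 \<le> t" "t \<le> 1"
  shows "1 + ((1 / (1 - y)) ^ k - 1) * t \<le> (1 + t * y) ^ k * (1 + y^2) ^ (2 * k + 4 * 3 ^ k)"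
proof -
  define w where "w = y + 2 * y^2"
  have "y^2 \<le> y / 2" using y by (simp add: power2_eq_square mult_left_mono[of y "1/2" y, simplified])
  then have w: "0 \<le> w" "w \<le> 1" "w \<le> 2 * y" using y by (auto simp: w_def)
  have "1 \<le> (1 + w) * (1 - y)" using y
    by (simp add: w_def algebra_simps power2_eq_square power3_eq_cube)
  then have "1 / (1 - y) \<le> 1 + w" using y by (simp add: field_simps)
  then have "(1 / (1 - y)) ^ k \<le> 1 + real k * w + 3 ^ k * w^2"
    using power_mono[of _ _ k] one_plus_power_le_quadratic[OF w(1,2), of k] y by force
  then have "((1 / (1 - y)) ^ k - 1) * t \<le> (real k * w + 3 ^ k * w^2) * t"
    using t by (intro mult_right_mono) auto
  then have "1 + ((1 / (1 - y)) ^ k - 1) * t \<le> 1 + real k * (t * w) + 3 ^ k * w^2 * t"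
    by (simp add: algebra_simps)
  also have "\<dots> \<le> (1 + t * w) ^ k + 3 ^ k * w^2"
  proof -
    have "0 \<le> t * w" using t w by simp
    then have "1 + real k * (t * w) \<le> (1 + t * w) ^ k" by (intro Bernoulli_inequality) linarith
    moreover have "3 ^ k * w^2 * t \<le> 3 ^ k * w^2" using t by (intro mult_left_le) auto
    ultimately show ?thesis by linarith
  qed
  also have "\<dots> \<le> (1 + t * w) ^ k * (1 + 3 ^ k * w^2)"
  proof -
    have "1 \<le> (1 + t * w) ^ k" using t w by simp
    from mult_right_mono[OF this, of "3 ^ k * w^2"] show ?thesis by (simp add: algebra_simps)
  qed
  also have "\<dots> \<le> ((1 + t * y) * (1 + y^2) ^ 2) ^ k * (1 + y^2) ^ (4 * 3 ^ k)"
  proof (rule mult_mono)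
    have "1 + t * w \<le> (1 + t * y) * (1 + y^2) ^ 2"
      unfolding w_def using y t by (intro one_plus_linear_quadratic_le) auto
    then show "(1 + t * w) ^ k \<le> ((1 + t * y) * (1 + y^2) ^ 2) ^ k"
      using t w by (intro power_mono) auto
    have "3 ^ k * w^2 \<le> real (4 * 3 ^ k) * y^2"
      using power_mono[OF w(3) w(1), of 2] by (simp add: power_mult_distrib)
    also have "1 + \<dots> \<le> (1 + y^2) ^ (4 * 3 ^ k)"
      by (rule Bernoulli_inequality) (simp add: order.trans[of _ 0])
    finally show "1 + 3 ^ k * w^2 \<le> (1 + y^2) ^ (4 * 3 ^ k)" by simp
  qed (use t y in auto)
  also have "\<dots> = (1 + t * y) ^ k * (1 + y^2) ^ (2 * k + 4 * 3 ^ k)"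
    by (simp add: power_mult_distrib power_add power_mult)
  finally show ?thesis .
qed

lemma prod_phi_weight_prime_powr_le:
  fixes \<sigma> :: real
  assumes "finite P" "\<And>p. p \<in> P \<Longrightarrow> prime p" "0 < \<sigma>" "\<sigma> \<le> 1"
  shows "(\<Prod>p\<in>P. 1 + phi_weight_prime k p * real p powr (- \<sigma>))
         \<le> (1 + 1 / \<sigma>) ^ k * 2 ^ (2 * k + 4 * 3 ^ k)"
proof -
  define c where "c = 2 * k + 4 * 3 ^ k"
  have "(\<Prod>p\<in>P. 1 + phi_weight_prime k p * real p powr (- \<sigma>))
     \<le> (\<Prod>p\<in>P. (1 + real p powr (- 1 - \<sigma>)) ^ k * (1 + real p powr (- 1 - 1)) ^ c)"
  proof (rule prod_mono, rule conjI)
    fix p assume "p \<in> P"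
    then have p2: "real p \<ge> 2" using assms(2) prime_ge_2_nat by fastforce
    define t where "t = real p powr (- \<sigma>)"
    have t: "0 \<le> t" "t \<le> 1" using p2 assms(3) by (auto simp: t_def powr_minus field_simps ge_one_powr_ge_zero)
    show "0 \<le> 1 + phi_weight_prime k p * real p powr (- \<sigma>)"
      using phi_weight_prime_nonneg[of p k] p2 by simp
    have "1 / (1 - 1 / real p) = real p / (real p - 1)" using p2 by (simp add: field_simps)
    then have "1 + phi_weight_prime k p * t \<le> (1 + t * (1 / real p)) ^ k * (1 + (1 / real p)^2) ^ c"
      using euler_factor_le[of "1 / real p" t k] p2 t by (simp add: phi_weight_prime_def c_def mult.commute)
    also have "t * (1 / real p) = real p powr (- 1 - \<sigma>)"
      using p2 by (simp add: t_def powr_diff powr_minus field_simps)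
    also have "(1 / real p)^2 = real p powr (- 1 - 1)"
      using p2 by (simp add: powr_minus powr_numeral divide_inverse power_inverse)
    finally show "1 + phi_weight_prime k p * real p powr (- \<sigma>)
        \<le> (1 + real p powr (- 1 - \<sigma>)) ^ k * (1 + real p powr (- 1 - 1)) ^ c"
      by (simp add: t_def)
  qed
  also have "\<dots> = (\<Prod>p\<in>P. 1 + real p powr (- 1 - \<sigma>)) ^ k * (\<Prod>p\<in>P. 1 + real p powr (- 1 - 1)) ^ c"
    by (simp add: prod.distrib prod_power_distrib)
  also have "\<dots> \<le> (1 + 1 / \<sigma>) ^ k * (1 + 1 / 1) ^ c"
    using prod_primes_one_plus_powr_le[OF assms(1,2) assms(3)]
      prod_primes_one_plus_powr_le[OF assms(1,2) zero_less_one]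
    using assms(3) by (intro mult_mono power_mono) (auto intro!: prod_nonneg add_nonneg_nonneg zero_le_power)
  finally show ?thesis by (simp add: c_def)
qed

lemma sum_phi_weight_powr_le:
  fixes \<sigma> :: real
  assumes "0 < \<sigma>" "\<sigma> \<le> 1"
  shows "(\<Sum>d<n. phi_weight k d * real d powr (- \<sigma>)) \<le> (1 + 1 / \<sigma>) ^ k * 2 ^ (2 * k + 4 * 3 ^ k)"
proof -
  define P where "P = {p. prime p \<and> p < n}"
  let ?D = "{d::nat. squarefree d \<and> prime_factors d \<subseteq> P}"
  have fP: "finite P" and prP: "\<And>p. p \<in> P \<Longrightarrow> prime p" by (simp_all add: P_def)
  have "(\<Sum>d<n. phi_weight k d * real d powr (- \<sigma>))
        = (\<Sum>d\<in>{d. d < n \<and> squarefree d}. phi_weight k d * real d powr (- \<sigma>))"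
    by (intro sum.mono_neutral_right) (auto simp: phi_weight_def)
  also have "\<dots> \<le> (\<Sum>d\<in>?D. phi_weight k d * real d powr (- \<sigma>))"
    using squarefree_less_prime_factors_subset
    by (intro sum_mono2 finite_squarefree_prime_factors_subset[OF fP])
       (auto simp: P_def phi_weight_nonneg)
  also have "\<dots> = (\<Sum>d\<in>?D. \<Prod>p\<in>prime_factors d. phi_weight_prime k p * real p powr (- \<sigma>))"
    by (intro sum.cong refl)
       (simp add: phi_weight_def prod.distrib prod_prime_factors_powr_squarefree)
  also have "\<dots> = (\<Prod>p\<in>P. 1 + phi_weight_prime k p * real p powr (- \<sigma>))"
    by (rule prod_one_plus_eq_sum_squarefree[OF fP prP, symmetric])
  also have "\<dots> \<le> (1 + 1 / \<sigma>) ^ k * 2 ^ (2 * k + 4 * 3 ^ k)"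
    by (rule prod_phi_weight_prime_powr_le[OF fP prP assms])
  finally show ?thesis .
qed

lemma summable_phi_weight_powr:
  fixes \<sigma> :: real
  assumes "0 < \<sigma>" "\<sigma> \<le> 1"
  shows "summable (\<lambda>d. phi_weight k d * real d powr (- \<sigma>))"
    and "(\<Sum>d. phi_weight k d * real d powr (- \<sigma>)) \<le> (1 + 1 / \<sigma>) ^ k * 2 ^ (2 * k + 4 * 3 ^ k)"
proof -
  have bound: "(\<Sum>d\<le>n. phi_weight k d * real d powr (- \<sigma>)) \<le> (1 + 1 / \<sigma>) ^ k * 2 ^ (2 * k + 4 * 3 ^ k)" for n
    using sum_phi_weight_powr_le[OF assms, of k "Suc n"] by (simp add: lessThan_Suc_atMost)
  show s: "summable (\<lambda>d. phi_weight k d * real d powr (- \<sigma>))"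
    by (rule bounded_imp_summable[OF _ bound]) (simp add: phi_weight_nonneg)
  show "(\<Sum>d. phi_weight k d * real d powr (- \<sigma>)) \<le> (1 + 1 / \<sigma>) ^ k * 2 ^ (2 * k + 4 * 3 ^ k)"
    by (rule suminf_le_const[OF s sum_phi_weight_powr_le[OF assms]])
qed

lemma summable_phi_weight_div: "summable (\<lambda>d. phi_weight k d / real d)"
  using summable_phi_weight_powr(1)[of 1 k] by (simp add: powr_minus divide_inverse)

lemma prod_euler_factors_eq_sum_phi_weight:
  "(\<Prod>p | prime p \<and> p \<le> n. 1 + phi_weight_prime k p / real p)
   = (\<Sum>d | squarefree d \<and> prime_factors d \<subseteq> {p. prime p \<and> p \<le> n}. phi_weight k d / real d)"
proof -
  have "(\<Prod>p | prime p \<and> p \<le> n. 1 + phi_weight_prime k p / real p)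
    = (\<Sum>d | squarefree d \<and> prime_factors d \<subseteq> {p. prime p \<and> p \<le> n}.
         \<Prod>p\<in>prime_factors d. phi_weight_prime k p / real p)"
    by (rule prod_one_plus_eq_sum_squarefree) auto
  also have "\<dots> = (\<Sum>d | squarefree d \<and> prime_factors d \<subseteq> {p. prime p \<and> p \<le> n}. phi_weight k d / real d)"
  proof (intro sum.cong refl)
    fix d assume "d \<in> {d. squarefree d \<and> prime_factors d \<subseteq> {p. prime p \<and> p \<le> n}}"
    then have "squarefree d" by simp
    then show "(\<Prod>p\<in>prime_factors d. phi_weight_prime k p / real p) = phi_weight k d / real d"
      using prod_prime_factors_powr_squarefree[of d 1]
      by (simp add: prod_dividef phi_weight_def)
  qed
  finally show ?thesis .
qed

lemma singular_series_neg_eq_prodinf: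
  "singular_series_neg k = (\<Prod>n. 1 + (if prime n then phi_weight_prime k n / real n else 0))"
proof -
  have "(1 - 1 / real p) powi (- int k) = (real p / (real p - 1)) ^ k" if "prime p" for p
  proof -
    have "1 - 1 / real p = (real p - 1) / real p"
      using prime_gt_0_nat[OF that] by (simp add: field_simps)
    then show ?thesis by (simp add: power_int_minus power_divide)
  qed
  then show ?thesis
    unfolding singular_series_neg_def phi_weight_prime_def
    by (intro arg_cong[where f = prodinf] ext) auto
qed

lemma singular_series_neg_eq_suminf: "singular_series_neg k = (\<Sum>d. phi_weight k d / real d)"
proof -
  define a where "a n = (if prime n then phi_weight_prime k n / real n else 0)" for n
  define G where "G d = phi_weight k d / real d" for d
  define D where "D n = {d::nat. squarefree d \<and> prime_factors d \<subseteq> {p. prime p \<and> p \<le> n}}" for n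
  have G: "summable G" "\<And>d. G d \<ge> 0"
    using summable_phi_weight_div[of k] by (simp_all add: G_def[abs_def] phi_weight_nonneg)
  have finD: "finite (D n)" for n
    unfolding D_def by (rule finite_squarefree_prime_factors_subset) simp
  have partial: "(\<Prod>i\<le>n. 1 + a i) = (\<Sum>d\<in>D n. G d)" for n
  proof -
    have "(\<Prod>i\<le>n. 1 + a i) = (\<Prod>p | prime p \<and> p \<le> n. 1 + a p)"
      by (intro prod.mono_neutral_right) (auto simp: a_def)
    also have "\<dots> = (\<Prod>p | prime p \<and> p \<le> n. 1 + phi_weight_prime k p / real p)"
      by (intro prod.cong) (auto simp: a_def)
    finally show ?thesis by (simp add: prod_euler_factors_eq_sum_phi_weight D_def G_def)
  qed
  have lower: "(\<Sum>d<Suc n. G d) \<le> (\<Prod>i\<le>n. 1 + a i)" for n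
  proof -
    have "(\<Sum>d<Suc n. G d) = (\<Sum>d | d < Suc n \<and> squarefree d. G d)"
      by (intro sum.mono_neutral_right) (auto simp: G_def phi_weight_def)
    also have "\<dots> \<le> (\<Sum>d\<in>D n. G d)"
      using squarefree_less_prime_factors_subset[of _ "Suc n"] G(2)
      by (intro sum_mono2 finD) (auto simp: D_def less_Suc_eq_le)
    finally show ?thesis by (simp add: partial)
  qed
  have upper: "(\<Prod>i\<le>n. 1 + a i) \<le> suminf G" for n
    using partial[of n] sum_le_suminf[OF G(1) finD] G(2) by simp
  have "(\<lambda>n. \<Sum>d<Suc n. G d) \<longlonglongrightarrow> suminf G"
    using summable_LIMSEQ[OF G(1)] by (rule LIMSEQ_Suc)
  from tendsto_sandwich[OF _ _ this tendsto_const]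
  have lim: "(\<lambda>n. \<Prod>i\<le>n. 1 + a i) \<longlonglongrightarrow> suminf G"
    using lower upper by auto
  have "1 \<le> suminf G"
    using sum_le_suminf[OF G(1), of "{1}"] G(2) by (simp add: G_def phi_weight_def)
  with lim have "(\<lambda>n. 1 + a n) has_prod suminf G"
    by (simp add: has_prod_def raw_has_prod_def)
  then have "suminf G = prodinf (\<lambda>n. 1 + a n)" by (rule has_prod_unique)
  then show ?thesis by (simp add: singular_series_neg_eq_prodinf a_def G_def[abs_def])
qed

lemma one_plus_ln_le_two_powr_half:
  fixes u :: real
  assumes "u > 0"
  shows "1 + ln u \<le> 2 * u powr (1/2)"
  using ln_le_minus_one[of "u powr (1/2)"] assms by (simp add: ln_powr)

lemma summable_phi_weight_ln_div: "summable (\<lambda>d. phi_weight k d * ln (real d) / real d)"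
proof (rule summable_comparison_test[OF _ summable_mult[OF summable_phi_weight_powr(1)[of "1/2" k], of 2]])
  have "norm (phi_weight k d * ln (real d) / real d) \<le> 2 * (phi_weight k d * real d powr - (1/2))"
    if "d \<ge> 1" for d
  proof -
    have d: "real d \<ge> 1" using that by simp
    have "ln (real d) / real d \<le> 2 * real d powr (1/2) / real d"
      using one_plus_ln_le_two_powr_half[of "real d"] d by (simp add: divide_right_mono)
    also have "\<dots> = 2 * real d powr - (1/2)"
      using d by (simp add: powr_minus field_simps powr_mult_base[symmetric] powr_add[symmetric])
    finally have "phi_weight k d * (ln (real d) / real d) \<le> phi_weight k d * (2 * real d powr - (1/2))"
      by (rule mult_left_mono[OF _ phi_weight_nonneg])
    then show ?thesis using d phi_weight_nonneg[of k d] by (simp add: abs_mult)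
  qed
  then show "\<exists>N. \<forall>n\<ge>N. norm (phi_weight k n * ln (real n) / real n) \<le> 2 * (phi_weight k n * real n powr - (1/2))"
    by blast
qed auto

text \<open>For d > x the harmonic number is harm 0 = 0 and the error is ln(d/x) - gamma, so one bound
  covers both the range d <= x and the tail of the series.\<close>

lemma harm_floor_div_error_le:
  fixes x \<sigma> :: real
  assumes x: "x > 0" and d: "d > 0" and \<sigma>: "0 \<le> \<sigma>" "\<sigma> \<le> 1/2"
  shows "\<bar>harm (nat \<lfloor>x / real d\<rfloor>) - ln (x / real d) - euler_mascheroni\<bar> / real d
         \<le> 2 / x * (x / real d) powr \<sigma>"
proof (cases "real d \<le> x")
  case True
  then have y: "x / real d \<ge> 1" using d by simp
  have "\<bar>harm (nat \<lfloor>x / real d\<rfloor>) - ln (x / real d) - euler_mascheroni\<bar> / real d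
        \<le> 2 / (x / real d) / real d"
    by (rule divide_right_mono[OF harm_floor_approx[OF y]]) simp
  also have "\<dots> = 2 / x * 1" using d by simp
  also have "\<dots> \<le> 2 / x * (x / real d) powr \<sigma>"
    using x y \<sigma> by (intro mult_left_mono ge_one_powr_ge_zero) auto
  finally show ?thesis .
next
  case False
  define u where "u = real d / x"
  have u: "u \<ge> 1" using False x by (simp add: u_def)
  have "nat \<lfloor>x / real d\<rfloor> = 0" using False x by simp
  moreover have "ln (x / real d) = - ln u" using x d by (simp add: u_def ln_div)
  ultimately have "\<bar>harm (nat \<lfloor>x / real d\<rfloor>) - ln (x / real d) - euler_mascheroni\<bar> = \<bar>ln u - euler_mascheroni\<bar>"
    by (simp add: harm_expand(1))
  also have "\<dots> \<le> 1 + ln u"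
  proof -
    have "0 \<le> ln u" "0 \<le> (euler_mascheroni::real)" "euler_mascheroni \<le> (1::real)"
      using u euler_mascheroni_pos euler_mascheroni_less_13_over_22 by auto
    then show ?thesis by (simp add: abs_le_iff)
  qed
  also have "\<dots> \<le> 2 * u powr (1/2)" using u by (intro one_plus_ln_le_two_powr_half) simp
  also have "\<dots> \<le> 2 * u powr (1 - \<sigma>)" using u \<sigma> by (intro mult_left_mono powr_mono) auto
  finally have "\<bar>harm (nat \<lfloor>x / real d\<rfloor>) - ln (x / real d) - euler_mascheroni\<bar> / real d
      \<le> 2 * u powr (1 - \<sigma>) / real d" using d by (simp add: divide_right_mono)
  also have "\<dots> = 2 / x * (x / real d) powr \<sigma>"
    using x d by (simp add: u_def powr_diff powr_divide field_simps)
  finally show ?thesis .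
qed

lemma suminf_harm_floor_div_eq:
  fixes g :: "nat \<Rightarrow> real" and x :: real
  assumes x: "x > 0" and g: "summable (\<lambda>d. g d / real d)" "summable (\<lambda>d. g d * ln (real d) / real d)"
  shows "(\<Sum>d. g d / real d * harm (nat \<lfloor>x / real d\<rfloor>))
    = (\<Sum>d. g d / real d) * ln x + (euler_mascheroni * (\<Sum>d. g d / real d) - (\<Sum>d. g d * ln (real d) / real d))
      + (\<Sum>d. g d / real d * (harm (nat \<lfloor>x / real d\<rfloor>) - ln (x / real d) - euler_mascheroni))"
proof -
  have fin: "summable (\<lambda>d. g d / real d * harm (nat \<lfloor>x / real d\<rfloor>))"
  proof (rule summable_finite[of "{..nat \<lfloor>x\<rfloor>}"])
    fix d assume "d \<notin> {..nat \<lfloor>x\<rfloor>}"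
    then have "x < real d" by (meson atMost_iff le_nat_floor not_le)
    with x show "g d / real d * harm (nat \<lfloor>x / real d\<rfloor>) = 0" by (simp add: harm_expand(1))
  qed simp
  have pointwise: "g d / real d * (harm (nat \<lfloor>x / real d\<rfloor>) - ln (x / real d) - euler_mascheroni)
      = g d / real d * harm (nat \<lfloor>x / real d\<rfloor>) - (ln x + euler_mascheroni) * (g d / real d)
        + g d * ln (real d) / real d" for d
    using x by (cases "d = 0") (simp_all add: ln_div algebra_simps)
  have "(\<Sum>d. g d / real d * (harm (nat \<lfloor>x / real d\<rfloor>) - ln (x / real d) - euler_mascheroni))
    = (\<Sum>d. g d / real d * harm (nat \<lfloor>x / real d\<rfloor>) - (ln x + euler_mascheroni) * (g d / real d))
      + (\<Sum>d. g d * ln (real d) / real d)"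
    unfolding pointwise by (rule suminf_add[OF summable_diff[OF fin summable_mult[OF g(1)]] g(2), symmetric])
  also have "(\<Sum>d. g d / real d * harm (nat \<lfloor>x / real d\<rfloor>) - (ln x + euler_mascheroni) * (g d / real d))
    = (\<Sum>d. g d / real d * harm (nat \<lfloor>x / real d\<rfloor>)) - (ln x + euler_mascheroni) * (\<Sum>d. g d / real d)"
    using suminf_diff[OF fin summable_mult[OF g(1)]] suminf_mult[OF g(1)] by simp
  finally show ?thesis by (simp add: algebra_simps)
qed

lemma suminf_harm_floor_div_error_le:
  fixes g :: "nat \<Rightarrow> real" and x \<sigma> :: real
  assumes x: "x > 0" and \<sigma>: "0 \<le> \<sigma>" "\<sigma> \<le> 1/2"
    and g: "\<And>d. g d \<ge> 0" "summable (\<lambda>d. g d * real d powr (- \<sigma>))"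
  shows "\<bar>\<Sum>d. g d / real d * (harm (nat \<lfloor>x / real d\<rfloor>) - ln (x / real d) - euler_mascheroni)\<bar>
         \<le> 2 * x powr \<sigma> / x * (\<Sum>d. g d * real d powr (- \<sigma>))"
proof -
  define K where "K = 2 * x powr \<sigma> / x"
  have bound: "norm (g d / real d * (harm (nat \<lfloor>x / real d\<rfloor>) - ln (x / real d) - euler_mascheroni))
              \<le> K * (g d * real d powr (- \<sigma>))" for d
  proof (cases "d = 0")
    case False
    have "norm (g d / real d * (harm (nat \<lfloor>x / real d\<rfloor>) - ln (x / real d) - euler_mascheroni))
        = g d * (\<bar>harm (nat \<lfloor>x / real d\<rfloor>) - ln (x / real d) - euler_mascheroni\<bar> / real d)"
      using g(1)[of d] by (simp add: abs_mult)
    also have "\<dots> \<le> g d * (2 / x * (x / real d) powr \<sigma>)"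
      using False harm_floor_div_error_le[OF x _ \<sigma>, of d] g(1) by (intro mult_left_mono) auto
    also have "\<dots> = K * (g d * real d powr (- \<sigma>))"
      using x by (simp add: K_def powr_divide powr_minus field_simps)
    finally show ?thesis .
  qed (simp add: K_def)
  have sK: "summable (\<lambda>d. K * (g d * real d powr (- \<sigma>)))" by (rule summable_mult[OF g(2)])
  have sn: "summable (\<lambda>d. norm (g d / real d * (harm (nat \<lfloor>x / real d\<rfloor>) - ln (x / real d) - euler_mascheroni)))"
    by (rule summable_comparison_test'[OF sK]) (simp only: real_norm_def abs_abs, rule bound[unfolded real_norm_def])
  have "\<bar>\<Sum>d. g d / real d * (harm (nat \<lfloor>x / real d\<rfloor>) - ln (x / real d) - euler_mascheroni)\<bar>
      \<le> (\<Sum>d. norm (g d / real d * (harm (nat \<lfloor>x / real d\<rfloor>) - ln (x / real d) - euler_mascheroni)))"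
    using summable_norm[OF sn] by simp
  also have "\<dots> \<le> (\<Sum>d. K * (g d * real d powr (- \<sigma>)))" by (rule suminf_le[OF bound sn sK])
  also have "\<dots> = K * (\<Sum>d. g d * real d powr (- \<sigma>))" by (rule suminf_mult[OF g(2)])
  finally show ?thesis by (simp add: K_def)
qed

lemma nat_floor_divide_of_nat:
  assumes "x \<ge> 0" "d > 0"
  shows "nat \<lfloor>x / real d\<rfloor> = nat \<lfloor>x\<rfloor> div d"
proof -
  have "\<lfloor>x / real d\<rfloor> = \<lfloor>x\<rfloor> div int d"
    using floor_divide_real_eq_div[of "int d" x] by simp
  then show ?thesis using assms by (simp add: nat_div_distrib)
qed

lemma sum_totient_ratio_eq_suminf_harm:
  assumes "k \<ge> 1" "x \<ge> 0"
  shows "(\<Sum>n\<in>{1..nat \<lfloor>x\<rfloor>}. real n ^ (k - 1) / real (totient n) ^ k)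
         = (\<Sum>d. phi_weight k d / real d * harm (nat \<lfloor>x / real d\<rfloor>))"
proof -
  have "(\<Sum>n\<in>{1..nat \<lfloor>x\<rfloor>}. real n ^ (k - 1) / real (totient n) ^ k)
        = (\<Sum>d\<in>{1..nat \<lfloor>x\<rfloor>}. phi_weight k d / real d * harm (nat \<lfloor>x / real d\<rfloor>))"
    unfolding sum_totient_ratio_eq_sum_harm[OF assms(1)]
    using assms(2) by (intro sum.cong refl) (simp add: nat_floor_divide_of_nat)
  also have "\<dots> = (\<Sum>d. phi_weight k d / real d * harm (nat \<lfloor>x / real d\<rfloor>))"
  proof (rule suminf_finite[symmetric])
    fix d assume "d \<notin> {1..nat \<lfloor>x\<rfloor>}"
    then have "d = 0 \<or> x < real d" by (meson atLeastAtMost_iff le_nat_floor not_le less_one)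
    then show "phi_weight k d / real d * harm (nat \<lfloor>x / real d\<rfloor>) = 0"
      using assms by (auto simp: harm_expand(1))
  qed simp
  finally show ?thesis .
qed

lemma rankin_exponent_bounds:
  fixes x :: real
  assumes "x \<ge> 2"
  defines "\<sigma> \<equiv> 1 / (4 * ln x)"
  shows "0 < \<sigma>" "\<sigma> \<le> 1/2" "x powr \<sigma> \<le> 2" "(1 + 1 / \<sigma>) ^ k \<le> 6 ^ k * ln x ^ k"
proof -
  have lx: "ln x \<ge> 2/3" using ln2_ge_two_thirds ln_le_cancel_iff[of 2 x] assms(1) by linarith
  then show \<sigma>: "0 < \<sigma>" "\<sigma> \<le> 1/2" by (simp_all add: \<sigma>_def field_simps)
  have "x powr \<sigma> = exp (1/4)" using assms(1) lx by (simp add: powr_def \<sigma>_def)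
  also have "\<dots> \<le> exp (ln 2)" using ln2_ge_two_thirds by (subst exp_le_cancel_iff) linarith
  finally show "x powr \<sigma> \<le> 2" by simp
  have "1 + 1 / \<sigma> \<le> 6 * ln x" using lx by (simp add: \<sigma>_def)
  then have "(1 + 1 / \<sigma>) ^ k \<le> (6 * ln x) ^ k"
    using \<sigma> by (intro power_mono) simp_all
  then show "(1 + 1 / \<sigma>) ^ k \<le> 6 ^ k * ln x ^ k"
    by (simp add: power_mult_distrib)
qed

lemma sum_totient_ratio_error_le:
  assumes k: "k \<ge> 1" and x: "x \<ge> 2"
  shows "\<bar>(\<Sum>n\<in>{1..nat \<lfloor>x\<rfloor>}. real n ^ (k - 1) / real (totient n) ^ k)
      - ((\<Sum>d. phi_weight k d / real d) * ln x
         + (euler_mascheroni * (\<Sum>d. phi_weight k d / real d) - (\<Sum>d. phi_weight k d * ln (real d) / real d)))\<bar>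
      \<le> 4 * 6 ^ k * 2 ^ (2 * k + 4 * 3 ^ k) * ln x ^ k / x"
proof -
  define \<sigma> where "\<sigma> = 1 / (4 * ln x)"
  have \<sigma>: "0 < \<sigma>" "\<sigma> \<le> 1/2" and x\<sigma>: "x powr \<sigma> \<le> 2"
    and rankin: "(1 + 1 / \<sigma>) ^ k \<le> 6 ^ k * ln x ^ k"
    using rankin_exponent_bounds[OF x] unfolding \<sigma>_def by blast+
  have "(\<Sum>n\<in>{1..nat \<lfloor>x\<rfloor>}. real n ^ (k - 1) / real (totient n) ^ k)
      - ((\<Sum>d. phi_weight k d / real d) * ln x
         + (euler_mascheroni * (\<Sum>d. phi_weight k d / real d) - (\<Sum>d. phi_weight k d * ln (real d) / real d)))
      = (\<Sum>d. phi_weight k d / real d * (harm (nat \<lfloor>x / real d\<rfloor>) - ln (x / real d) - euler_mascheroni))"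
    using sum_totient_ratio_eq_suminf_harm[OF k, of x]
      suminf_harm_floor_div_eq[OF _ summable_phi_weight_div summable_phi_weight_ln_div, of x k] x
    by linarith
  then have "\<bar>(\<Sum>n\<in>{1..nat \<lfloor>x\<rfloor>}. real n ^ (k - 1) / real (totient n) ^ k)
      - ((\<Sum>d. phi_weight k d / real d) * ln x
         + (euler_mascheroni * (\<Sum>d. phi_weight k d / real d) - (\<Sum>d. phi_weight k d * ln (real d) / real d)))\<bar>
      \<le> 2 * x powr \<sigma> / x * (\<Sum>d. phi_weight k d * real d powr (- \<sigma>))"
    using suminf_harm_floor_div_error_le[of x \<sigma> "phi_weight k"] x \<sigma> phi_weight_nonneg
      summable_phi_weight_powr(1)[OF \<sigma>(1), of k]
    by simp
  also have "\<dots> \<le> 2 * 2 / x * ((1 + 1 / \<sigma>) ^ k * 2 ^ (2 * k + 4 * 3 ^ k))"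
  proof (rule mult_mono)
    show "2 * x powr \<sigma> / x \<le> 2 * 2 / x" using x x\<sigma> by (simp add: divide_right_mono)
    show "(\<Sum>d. phi_weight k d * real d powr (- \<sigma>)) \<le> (1 + 1 / \<sigma>) ^ k * 2 ^ (2 * k + 4 * 3 ^ k)"
      by (rule summable_phi_weight_powr(2)[OF \<sigma>(1)]) (use \<sigma> in simp)
    show "0 \<le> (\<Sum>d. phi_weight k d * real d powr (- \<sigma>))"
      using \<sigma> by (intro suminf_nonneg summable_phi_weight_powr(1)) (simp_all add: phi_weight_nonneg)
  qed (use x in simp)
  also have "\<dots> \<le> 2 * 2 / x * (6 ^ k * ln x ^ k * 2 ^ (2 * k + 4 * 3 ^ k))"
    using x rankin by (intro mult_left_mono mult_right_mono) simp_all
  finally show ?thesis by (simp add: field_simps)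
qed

theorem mainTheorem6:
  fixes k :: nat
  assumes "k \<ge> 1"
  shows "\<exists>C M :: real. \<forall>x :: real. x \<ge> 2 \<longrightarrow>
    \<bar>(\<Sum>n\<in>{1..nat \<lfloor>x\<rfloor>}. real n ^ (k - 1) / real (totient n) ^ k)
      - (singular_series_neg k * ln x + C)\<bar> \<le> M * (ln x) ^ k / x"
proof (intro exI allI impI)
  fix x :: real assume "x \<ge> 2"
  from sum_totient_ratio_error_le[OF assms this]
  show "\<bar>(\<Sum>n\<in>{1..nat \<lfloor>x\<rfloor>}. real n ^ (k - 1) / real (totient n) ^ k)
      - (singular_series_neg k * ln x
         + (euler_mascheroni * (\<Sum>d. phi_weight k d / real d) - (\<Sum>d. phi_weight k d * ln (real d) / real d)))\<bar>
      \<le> 4 * 6 ^ k * 2 ^ (2 * k + 4 * 3 ^ k) * (ln x) ^ k / x"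
    by (simp add: singular_series_neg_eq_suminf)
qed

end
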